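(* Let $(A,[\cdot,\cdot],\circ)$ and $(V,[\cdot,\cdot]_V,\circ_V)$ be Malcev-Poisson algebras and $\varrho,\mu:A\to\mathrm{End}(V)$ linear maps. Then $(V,\circ_V,[\cdot,\cdot]_V,\mu,\varrho)$ is an $A$-module Malcev-Poisson algebra if and only if $A\oplus V$ is a Malcev-Poisson algebra with the operations $$\{x+a,y+b\}=[x,y]+\varrho(x)b-\varrho(y)a+[a,b]_V,\qquad (x+a)\bullet(y+b)=x\circ y+\mu(x)b+\mu(y)a+a\circ_Vb,$$ for $x,y\in A$, $a,b\in V$.
   Context: Field $\mathbb{K}$ algebraically closed, characteristic $0$; spaces finite-dimensional. Malcev algebra: antisymmetric bracket with $J(x,y,[x,z])=[J(x,y,z),x]$, $J(x,y,z)=[[x,y],z]+[[z,x],y]+[[y,z],x]$. Malcev-Poisson algebra: Malcev bracket plus commutative associative product $\circ$ with $[x,y\circ z]=[x,y]\circ z+y\circ[x,z]$. Representations: Malcev, $\varrho([[x,y],z])=\varrho(z)\varrho(y)\varrho(x)-\varrho(y)\varrho(x)\varrho(z)+\varrho(x)\varrho([y,z])+\varrho([x,z])\varrho(y)$; associative, $\mu(x\circ y)=\mu(x)\mu(y)$; Malcev-Poisson, $(V,\varrho,\mu)$ with both and $\varrho(x\circ y)=\mu(y)\varrho(x)+\mu(x)\varrho(y)$, $\mu([x,y])=\varrho(x)\mu(y)-\mu(y)\varrho(x)$. $A$-module Malcev algebra $(V,[\cdot,\cdot]_V,\varrho)$: $\varrho$ a Malcev representation and for $x,y\in A$, $a,b,c\in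 V$: $\varrho([x,y])[a,b]_V=\varrho(x)[\varrho(y)a,b]_V-[\varrho(y)\varrho(x)a,b]_V-[\varrho(x)\varrho(y)b,a]_V+\varrho(y)[\varrho(x)b,a]_V$; $[\varrho(x)a,\varrho(y)b]_V=[\varrho([x,y])a,b]_V-\varrho(x)[\varrho(y)a,b]_V+\varrho(y)\varrho(x)[a,b]_V+[\varrho(y)\varrho(x)b,a]_V$; $[\varrho(x)a,[b,c]_V]_V=[[\varrho(x)b,a]_V,c]_V-\varrho(x)[[b,a]_V,c]_V-[\varrho(x)[a,c]_V,b]_V-[[\varrho(x)c,b]_V,a]_V$. $A$-module associative algebra $(V,\circ_V,\mu)$: $\mu$ an associative representation and $\mu(x)(a\circ_Vb)=(\mu(x)a)\circ_Vb$. $A$-module Malcev-Poisson algebra $(V,\circ_V,[\cdot,\cdot]_V,\mu,\varrho)$: $(V,[\cdot,\cdot]_V,\varrho)$ an $A$-module Malcev algebra, $(V,\circ_V,\mu)$ an $A$-module associative algebra, $(V,\varrho,\mu)$ a Malcev-Poisson representation of $A$, and $\varrho(x)(a\circ_Vb)=(\varrho(x)a)\circ_Vb+a\circ_V(\varrho(x)b)$, $[a,\mu(x)b]_V=-(\varrho(x)a)\circ_Vb+\mu(x)[a,b]_V$ for all $x\in A$, $a,b\in V$. *)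

theory Defs
  imports "HOL-Library.Product_Plus" "HOL-Computational_Algebra.Polynomial"
begin

definition alg_closed :: "'k::field itself \<Rightarrow> bool" where
  "alg_closed _ \<longleftrightarrow> (\<forall>p :: 'k poly. degree p > 0 \<longrightarrow> (\<exists>z. poly p z = 0))"

definition fin_dim :: "('k::field \<Rightarrow> 'a::ab_group_add \<Rightarrow> 'a) \<Rightarrow> bool" where
  "fin_dim s \<longleftrightarrow> vector_space s \<and> (\<exists>B. finite B \<and> module.span s B = UNIV)"

definition bilin :: "('k::field \<Rightarrow> 'a::ab_group_add \<Rightarrow> 'a) \<Rightarrow> ('a \<Rightarrow> 'a \<Rightarrow> 'a) \<Rightarrow> bool" where
  "bilin s f \<longleftrightarrow> (\<forall>x. Vector_Spaces.linear s s (f x)) \<and> (\<forall>y. Vector_Spaces.linear s s (\<lambda>x. f x y))"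

definition jac :: "('a::ab_group_add \<Rightarrow> 'a \<Rightarrow> 'a) \<Rightarrow> 'a \<Rightarrow> 'a \<Rightarrow> 'a \<Rightarrow> 'a" where
  "jac br x y z = br (br x y) z + br (br z x) y + br (br y z) x"

definition malcev_algebra :: "('k::field \<Rightarrow> 'a::ab_group_add \<Rightarrow> 'a) \<Rightarrow> ('a \<Rightarrow> 'a \<Rightarrow> 'a) \<Rightarrow> bool" where
  "malcev_algebra s br \<longleftrightarrow> vector_space s \<and> bilin s br \<and>
     (\<forall>x y. br x y = - br y x) \<and>
     (\<forall>x y z. jac br x y (br x z) = br (jac br x y z) x)"

definition malcev_poisson :: "('k::field \<Rightarrow> 'a::ab_group_add \<Rightarrow> 'a) \<Rightarrow> ('a \<Rightarrow> 'a \<Rightarrow> 'a) \<Rightarrow> ('a \<Rightarrow> 'a \<Rightarrow> 'a) \<Rightarrow> bool" where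
  "malcev_poisson s br pr \<longleftrightarrow> malcev_algebra s br \<and> bilin s pr \<and>
     (\<forall>x y. pr x y = pr y x) \<and> (\<forall>x y z. pr (pr x y) z = pr x (pr y z)) \<and>
     (\<forall>x y z. br x (pr y z) = pr (br x y) z + pr y (br x z))"

definition lin_end :: "('k::field \<Rightarrow> 'a::ab_group_add \<Rightarrow> 'a) \<Rightarrow> ('k \<Rightarrow> 'v::ab_group_add \<Rightarrow> 'v) \<Rightarrow> ('a \<Rightarrow> 'v \<Rightarrow> 'v) \<Rightarrow> bool" where
  "lin_end sA sV r \<longleftrightarrow> (\<forall>x. Vector_Spaces.linear sV sV (r x)) \<and> (\<forall>a. Vector_Spaces.linear sA sV (\<lambda>x. r x a))"

definition malcev_rep where
  "malcev_rep sA brA sV r \<longleftrightarrow> lin_end sA sV r \<and>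
     (\<forall>x y z v. r (brA (brA x y) z) v =
        r z (r y (r x v)) - r y (r x (r z v)) + r x (r (brA y z) v) + r (brA x z) (r y v))"

definition assoc_rep where
  "assoc_rep sA prA sV m \<longleftrightarrow> lin_end sA sV m \<and> (\<forall>x y v. m (prA x y) v = m x (m y v))"

definition mp_rep where
  "mp_rep sA brA prA sV r m \<longleftrightarrow> malcev_rep sA brA sV r \<and> assoc_rep sA prA sV m \<and>
     (\<forall>x y v. r (prA x y) v = m y (r x v) + m x (r y v)) \<and>
     (\<forall>x y v. m (brA x y) v = r x (m y v) - m y (r x v))"

definition module_malcev where
  "module_malcev sA brA sV brV r \<longleftrightarrow> malcev_rep sA brA sV r \<and>
    (\<forall>x y a b. r (brA x y) (brV a b) =
        r x (brV (r y a) b) - brV (r y (r x a)) b - brV (r x (r y b)) a + r y (brV (r x b) a)) \<and>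
    (\<forall>x y a b. brV (r x a) (r y b) =
        brV (r (brA x y) a) b - r x (brV (r y a) b) + r y (r x (brV a b)) + brV (r y (r x b)) a) \<and>
    (\<forall>x a b c. brV (r x a) (brV b c) =
        brV (brV (r x b) a) c - r x (brV (brV b a) c) - brV (r x (brV a c)) b - brV (brV (r x c) b) a)"

definition module_assoc where
  "module_assoc sA prA sV prV m \<longleftrightarrow> assoc_rep sA prA sV m \<and>
    (\<forall>x a b. m x (prV a b) = prV (m x a) b)"

definition module_mp where
  "module_mp sA brA prA sV prV brV m r \<longleftrightarrow>
     module_malcev sA brA sV brV r \<and> module_assoc sA prA sV prV m \<and> mp_rep sA brA prA sV r m \<and>
     (\<forall>x a b. r x (prV a b) = prV (r x a) b + prV a (r x b)) \<and>
     (\<forall>x a b. brV a (m x b) = - prV (r x a) b + m x (brV a b))"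

definition sum_scale :: "('k \<Rightarrow> 'a \<Rightarrow> 'a) \<Rightarrow> ('k \<Rightarrow> 'v \<Rightarrow> 'v) \<Rightarrow> 'k \<Rightarrow> 'a \<times> 'v \<Rightarrow> 'a \<times> 'v" where
  "sum_scale sA sV c p = (sA c (fst p), sV c (snd p))"

definition sum_br :: "('a \<Rightarrow> 'a \<Rightarrow> 'a) \<Rightarrow> ('v::ab_group_add \<Rightarrow> 'v \<Rightarrow> 'v) \<Rightarrow> ('a \<Rightarrow> 'v \<Rightarrow> 'v) \<Rightarrow> 'a \<times> 'v \<Rightarrow> 'a \<times> 'v \<Rightarrow> 'a \<times> 'v" where
  "sum_br brA brV r p q = (brA (fst p) (fst q), r (fst p) (snd q) - r (fst q) (snd p) + brV (snd p) (snd q))"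

definition sum_pr :: "('a \<Rightarrow> 'a \<Rightarrow> 'a) \<Rightarrow> ('v::ab_group_add \<Rightarrow> 'v \<Rightarrow> 'v) \<Rightarrow> ('a \<Rightarrow> 'v \<Rightarrow> 'v) \<Rightarrow> 'a \<times> 'v \<Rightarrow> 'a \<times> 'v \<Rightarrow> 'a \<times> 'v" where
  "sum_pr prA prV m p q = (prA (fst p) (fst q), m (fst p) (snd q) + m (fst q) (snd p) + prV (snd p) (snd q))"

end

theory Submission
  imports Defs
begin

text \<open>The Malcev-Poisson axioms for given bilinear operations say that three multilinear
  defects vanish: that of the Malcev identity, of associativity and of the Leibniz rule. By
  polarization it suffices to evaluate them on elements lying in \<open>A\<close> or in \<open>V\<close>. On
  \<open>A \<oplus> V\<close> their \<open>A\<close>-components are the defects in \<open>A\<close>, and their \<open>V\<close>-components are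
  linear combinations of the defects of the axioms of an \<open>A\<close>-module Malcev-Poisson algebra;
  conversely every such axiom is recovered from finitely many of these evaluations (for the
  Malcev part only after doubling, which is where the characteristic enters). So the Malcev
  identity on \<open>A \<oplus> V\<close> amounts to the module Malcev axioms, associativity to the module
  associative axioms, and the Leibniz rule to the remaining compatibility conditions.\<close>

lemma bilin_iff_lin_end: "bilin s f \<longleftrightarrow> lin_end s s f"
  by (simp add: bilin_def lin_end_def)

lemma lin_end_simps:
  assumes "lin_end sA sV f"
  shows "f x (u + w) = f x u + f x w" "f (x + y) u = f x u + f y u"
    "f x (u - w) = f x u - f x w" "f (x - y) u = f x u - f y u"
    "f x (- u) = - f x u" "f (- x) u = - f x u"
    "f x 0 = 0" "f 0 u = 0"
    "f x (sV c u) = sV c (f x u)" "f (sA c x) u = sV c (f x u)"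
proof -
  have right: "module_hom sV sV (f x)" and left: "module_hom sA sV (\<lambda>x. f x u)"
    using assms by (auto simp: lin_end_def module_hom_iff_linear)
  show "f x (u + w) = f x u + f x w" "f x (u - w) = f x u - f x w" "f x (- u) = - f x u"
    "f x 0 = 0" "f x (sV c u) = sV c (f x u)"
    using module_hom.add[OF right] module_hom.diff[OF right] module_hom.neg[OF right]
      module_hom.zero[OF right] module_hom.scale[OF right] by auto
  show "f (x + y) u = f x u + f y u" "f (x - y) u = f x u - f y u" "f (- x) u = - f x u"
    "f 0 u = 0" "f (sA c x) u = sV c (f x u)"
    using module_hom.add[OF left] module_hom.diff[OF left] module_hom.neg[OF left]
      module_hom.zero[OF left] module_hom.scale[OF left] by auto
qed

lemma double_eq_zero_imp_zero:
  fixes s :: "'k::field_char_0 \<Rightarrow> 'b::ab_group_add \<Rightarrow> 'b"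
    and w :: 'b
  assumes "vector_space s" and "w + w = 0"
  shows "w = 0"
proof -
  interpret vector_space s by fact
  have "w = s (1/2 + 1/2) w" by simp
  also have "\<dots> = s (1/2) (w + w)" by (simp only: scale_left_distrib scale_right_distrib)
  finally show ?thesis using assms(2) by simp
qed

text \<open>Writing an antisymmetric bracket as \<open>K u w - K w u\<close> with \<open>K\<close> bilinear turns every identity
  that holds modulo antisymmetry into a consequence of bilinearity alone, which the simplifier
  (with its cancellation simprocs for abelian groups) decides by expanding both sides.\<close>

definition half_op :: "('k::field \<Rightarrow> 'b::ab_group_add \<Rightarrow> 'b) \<Rightarrow> ('b \<Rightarrow> 'b \<Rightarrow> 'b) \<Rightarrow> 'b \<Rightarrow> 'b \<Rightarrow> 'b"
  where "half_op s br u w = s (1/2) (br u w)"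

lemma lin_end_half_op:
  assumes "vector_space s" and "bilin s br"
  shows "lin_end s s (half_op s br)"
proof -
  interpret vector_space s by fact
  show ?thesis
    using assms(2) by (auto simp: bilin_def lin_end_def Vector_Spaces.linear_iff half_op_def
        scale_right_distrib mult.commute)
qed

lemma antisym_eq_half_op_diff:
  fixes s :: "'k::field_char_0 \<Rightarrow> 'b::ab_group_add \<Rightarrow> 'b"
  assumes "vector_space s" and "\<And>u w. br u w = - br w u"
  shows "br u w = half_op s br u w - half_op s br w u"
proof -
  interpret vector_space s by fact
  have "br u w = s (1/2 + 1/2) (br u w)" by simp
  also have "\<dots> = half_op s br u w - half_op s br w u"
    by (simp only: half_op_def scale_left_distrib assms(2)[of w u] scale_minus_right
        diff_conv_add_uminus minus_minus)
  finally show ?thesis .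
qed

definition malcev_defect :: "('b::ab_group_add \<Rightarrow> 'b \<Rightarrow> 'b) \<Rightarrow> 'b \<Rightarrow> 'b \<Rightarrow> 'b \<Rightarrow> 'b" where
  "malcev_defect br x y z = jac br x y (br x z) - br (jac br x y z) x"

definition malcev_polar :: "('b::ab_group_add \<Rightarrow> 'b \<Rightarrow> 'b) \<Rightarrow> 'b \<Rightarrow> 'b \<Rightarrow> 'b \<Rightarrow> 'b \<Rightarrow> 'b" where
  "malcev_polar br x w y z =
     jac br x y (br w z) + jac br w y (br x z) - br (jac br x y z) w - br (jac br w y z) x"

definition assoc_defect :: "('b::ab_group_add \<Rightarrow> 'b \<Rightarrow> 'b) \<Rightarrow> 'b \<Rightarrow> 'b \<Rightarrow> 'b \<Rightarrow> 'b" where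
  "assoc_defect pr x y z = pr (pr x y) z - pr x (pr y z)"

definition leibniz_defect ::
    "('b::ab_group_add \<Rightarrow> 'b \<Rightarrow> 'b) \<Rightarrow> ('b \<Rightarrow> 'b \<Rightarrow> 'b) \<Rightarrow> 'b \<Rightarrow> 'b \<Rightarrow> 'b \<Rightarrow> 'b" where
  "leibniz_defect br pr x y z = br x (pr y z) - pr (br x y) z - pr y (br x z)"

definition comm_assoc_algebra :: "('k::field \<Rightarrow> 'b::ab_group_add \<Rightarrow> 'b) \<Rightarrow> ('b \<Rightarrow> 'b \<Rightarrow> 'b) \<Rightarrow> bool"
  where "comm_assoc_algebra s pr \<longleftrightarrow> vector_space s \<and> bilin s pr \<and>
    (\<forall>x y. pr x y = pr y x) \<and> (\<forall>x y z. assoc_defect pr x y z = 0)"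

lemma malcev_algebra_iff_defect:
  "malcev_algebra s br \<longleftrightarrow> vector_space s \<and> bilin s br \<and> (\<forall>x y. br x y = - br y x) \<and>
     (\<forall>x y z. malcev_defect br x y z = 0)"
  by (simp add: malcev_algebra_def malcev_defect_def)

lemma malcev_poisson_iff_defects:
  "malcev_poisson s br pr \<longleftrightarrow>
     malcev_algebra s br \<and> comm_assoc_algebra s pr \<and> (\<forall>x y z. leibniz_defect br pr x y z = 0)"
  unfolding malcev_poisson_def comm_assoc_algebra_def assoc_defect_def leibniz_defect_def
    malcev_algebra_def by (auto simp only: right_minus_eq diff_diff_eq)

lemma
  assumes "bilin s br"
  shows malcev_defect_add_left: "malcev_defect br (x + w) y z =
      malcev_defect br x y z + malcev_defect br w y z + malcev_polar br x w y z"
    and malcev_defect_add_mid: "malcev_defect br x (y + y') z =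
      malcev_defect br x y z + malcev_defect br x y' z"
    and malcev_defect_add_right: "malcev_defect br x y (z + z') =
      malcev_defect br x y z + malcev_defect br x y z'"
    and malcev_polar_add_mid: "malcev_polar br x w (y + y') z =
      malcev_polar br x w y z + malcev_polar br x w y' z"
    and malcev_polar_add_right: "malcev_polar br x w y (z + z') =
      malcev_polar br x w y z + malcev_polar br x w y z'"
  using lin_end_simps[OF assms[unfolded bilin_iff_lin_end]]
  by (simp_all add: malcev_defect_def malcev_polar_def jac_def algebra_simps)

lemma malcev_polar_eq_0:
  assumes "bilin s br" and "\<And>x y z. malcev_defect br x y z = 0"
  shows "malcev_polar br x w y z = 0"
  using malcev_defect_add_left[OF assms(1), of x w y z] by (simp add: assms(2))

lemma vector_space_sum_scale:
  assumes "vector_space sA" and "vector_space sV"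
  shows "vector_space (sum_scale sA sV)"
proof -
  interpret A: vector_space sA by fact
  interpret V: vector_space sV by fact
  show ?thesis
    by unfold_locales (simp_all add: sum_scale_def prod_eq_iff A.scale_right_distrib
        V.scale_right_distrib A.scale_left_distrib V.scale_left_distrib)
qed

lemma bilin_sum_br:
  assumes "bilin sA brA" and "bilin sV brV" and "lin_end sA sV r"
  shows "bilin (sum_scale sA sV) (sum_br brA brV r)"
proof -
  have vs: "vector_space sA" "vector_space sV"
    using assms(1,2) by (auto simp: bilin_def Vector_Spaces.linear_iff)
  interpret V: vector_space sV by fact
  note simps = lin_end_simps[OF assms(1)[unfolded bilin_iff_lin_end]]
    lin_end_simps[OF assms(2)[unfolded bilin_iff_lin_end]] lin_end_simps[OF assms(3)]
  show ?thesis
    unfolding bilin_def Vector_Spaces.linear_iff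
    by (simp add: vector_space_sum_scale vs sum_br_def sum_scale_def simps
        V.scale_right_distrib V.scale_right_diff_distrib algebra_simps)
qed

lemma bilin_sum_pr:
  assumes "bilin sA prA" and "bilin sV prV" and "lin_end sA sV m"
  shows "bilin (sum_scale sA sV) (sum_pr prA prV m)"
proof -
  have vs: "vector_space sA" "vector_space sV"
    using assms(1,2) by (auto simp: bilin_def Vector_Spaces.linear_iff)
  interpret V: vector_space sV by fact
  note simps = lin_end_simps[OF assms(1)[unfolded bilin_iff_lin_end]]
    lin_end_simps[OF assms(2)[unfolded bilin_iff_lin_end]] lin_end_simps[OF assms(3)]
  show ?thesis
    unfolding bilin_def Vector_Spaces.linear_iff
    by (simp add: vector_space_sum_scale vs sum_pr_def sum_scale_def simps
        V.scale_right_distrib algebra_simps)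
qed

lemma sum_br_antisym:
  assumes "\<And>x y. brA x y = - brA y x" and "\<And>a b. brV a b = - brV b a"
  shows "sum_br brA brV r p q = - sum_br brA brV r q p"
  by (simp add: sum_br_def prod_eq_iff assms(1)[of "fst p"] assms(2)[of "snd p"])

lemma sum_pr_commute:
  assumes "\<And>x y. prA x y = prA y x" and "\<And>a b. prV a b = prV b a"
  shows "sum_pr prA prV m p q = sum_pr prA prV m q p"
  by (simp add: sum_pr_def prod_eq_iff assms(1)[of "fst p"] assms(2)[of "snd p"])

locale malcev_semidirect =
  fixes sA :: "'k::field_char_0 \<Rightarrow> 'a::ab_group_add \<Rightarrow> 'a"
    and sV :: "'k \<Rightarrow> 'v::ab_group_add \<Rightarrow> 'v"
    and brA :: "'a \<Rightarrow> 'a \<Rightarrow> 'a"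
    and brV :: "'v \<Rightarrow> 'v \<Rightarrow> 'v"
    and r :: "'a \<Rightarrow> 'v \<Rightarrow> 'v"
  assumes malcev_A: "malcev_algebra sA brA"
    and malcev_V: "malcev_algebra sV brV"
    and lin_r: "lin_end sA sV r"
begin

abbreviation br_sum where "br_sum \<equiv> sum_br brA brV r"

definition malcev_rep_defect :: "'a \<Rightarrow> 'a \<Rightarrow> 'a \<Rightarrow> 'v \<Rightarrow> 'v" where
  "malcev_rep_defect x y z v = r (brA (brA x y) z) v -
     (r z (r y (r x v)) - r y (r x (r z v)) + r x (r (brA y z) v) + r (brA x z) (r y v))"

definition module_malcev_defect1 :: "'a \<Rightarrow> 'a \<Rightarrow> 'v \<Rightarrow> 'v \<Rightarrow> 'v" where
  "module_malcev_defect1 x y a b = r (brA x y) (brV a b) -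
     (r x (brV (r y a) b) - brV (r y (r x a)) b - brV (r x (r y b)) a + r y (brV (r x b) a))"

definition module_malcev_defect2 :: "'a \<Rightarrow> 'a \<Rightarrow> 'v \<Rightarrow> 'v \<Rightarrow> 'v" where
  "module_malcev_defect2 x y a b = brV (r x a) (r y b) -
     (brV (r (brA x y) a) b - r x (brV (r y a) b) + r y (r x (brV a b)) + brV (r y (r x b)) a)"

definition module_malcev_defect3 :: "'a \<Rightarrow> 'v \<Rightarrow> 'v \<Rightarrow> 'v \<Rightarrow> 'v" where
  "module_malcev_defect3 x a b c = brV (r x a) (brV b c) -
     (brV (brV (r x b) a) c - r x (brV (brV b a) c) - brV (r x (brV a c)) b
      - brV (brV (r x c) b) a)"

lemma module_malcev_iff_defects:
  "module_malcev sA brA sV brV r \<longleftrightarrow>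
     (\<forall>x y z v. malcev_rep_defect x y z v = 0) \<and> (\<forall>x y a b. module_malcev_defect1 x y a b = 0) \<and>
     (\<forall>x y a b. module_malcev_defect2 x y a b = 0) \<and> (\<forall>x a b c. module_malcev_defect3 x a b c = 0)"
  unfolding module_malcev_def malcev_rep_def malcev_rep_defect_def module_malcev_defect1_def
    module_malcev_defect2_def module_malcev_defect3_def right_minus_eq
  using lin_r by blast

lemma vector_space_A: "vector_space sA" and vector_space_V: "vector_space sV"
  and bilin_brA: "bilin sA brA" and bilin_brV: "bilin sV brV"
  using malcev_A malcev_V by (simp_all add: malcev_algebra_def)

lemma malcev_defect_A: "malcev_defect brA x y z = 0"
  and malcev_defect_V: "malcev_defect brV a b c = 0"
  using malcev_A malcev_V unfolding malcev_algebra_iff_defect by blast+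

lemma bilin_br_sum: "bilin (sum_scale sA sV) br_sum"
  by (rule bilin_sum_br[OF bilin_brA bilin_brV lin_r])

lemma brA_split: "brA x y = half_op sA brA x y - half_op sA brA y x"
  using malcev_A unfolding malcev_algebra_def by (intro antisym_eq_half_op_diff) blast+

lemma brV_split: "brV a b = half_op sV brV a b - half_op sV brV b a"
  using malcev_V unfolding malcev_algebra_def by (intro antisym_eq_half_op_diff) blast+

lemmas bracket_expand = sum_br_def jac_def malcev_defect_def malcev_polar_def brA_split brV_split
  lin_end_simps(1-8)[OF lin_end_half_op[OF vector_space_A bilin_brA]]
  lin_end_simps(1-8)[OF lin_end_half_op[OF vector_space_V bilin_brV]]
  lin_end_simps(1-8)[OF lin_r]

lemma snd_malcev_defect_homogeneous:
  "snd (malcev_defect br_sum (x, 0) (y, 0) (z, 0)) = 0"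
  "snd (malcev_defect br_sum (x, 0) (y, 0) (0, c)) = - malcev_rep_defect x x y c"
  "snd (malcev_defect br_sum (x, 0) (0, b) (z, 0)) =
     malcev_rep_defect x x z b + malcev_rep_defect x z x b"
  "snd (malcev_defect br_sum (x, 0) (0, b) (0, c)) = module_malcev_defect2 x x b c"
  "snd (malcev_defect br_sum (0, a) (y, 0) (z, 0)) = module_malcev_defect2 y z a a"
  "snd (malcev_defect br_sum (0, a) (y, 0) (0, c)) = module_malcev_defect3 y a c a"
  "snd (malcev_defect br_sum (0, a) (0, b) (z, 0)) = module_malcev_defect3 z a a b"
  "snd (malcev_defect br_sum (0, a) (0, b) (0, c)) = malcev_defect brV a b c"
  by (simp_all add: bracket_expand malcev_rep_defect_def module_malcev_defect2_def
      module_malcev_defect3_def)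

lemma snd_malcev_polar_homogeneous:
  "snd (malcev_polar br_sum (x, 0) (0, a) (y, 0) (z, 0)) =
     - malcev_rep_defect x y z a - malcev_rep_defect y z x a"
  "snd (malcev_polar br_sum (x, 0) (0, a) (y, 0) (0, c)) =
     module_malcev_defect1 x y a c + module_malcev_defect2 x y c a"
  "snd (malcev_polar br_sum (x, 0) (0, a) (0, b) (z, 0)) =
     module_malcev_defect1 x z b a + module_malcev_defect2 z x a b"
  "snd (malcev_polar br_sum (x, 0) (0, a) (0, b) (0, c)) =
     - module_malcev_defect3 x a b c - module_malcev_defect3 x a c b
     - module_malcev_defect3 x b c a - module_malcev_defect3 x c a b"
  by (simp_all add: bracket_expand malcev_rep_defect_def module_malcev_defect1_def
      module_malcev_defect2_def module_malcev_defect3_def)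

lemma double_defects_eq_malcev_polar:
  "malcev_rep_defect x y z v + malcev_rep_defect x y z v =
     - snd (malcev_polar br_sum (x, 0) (y, 0) (z, 0) (0, v))
     + snd (malcev_polar br_sum (x, 0) (z, 0) (0, v) (y, 0))
     - snd (malcev_polar br_sum (x, 0) (0, v) (y, 0) (z, 0))"
  "module_malcev_defect1 x y a b + module_malcev_defect1 x y a b =
     - snd (malcev_polar br_sum (x, 0) (y, 0) (0, a) (0, b))
     - snd (malcev_polar br_sum (x, 0) (y, 0) (0, b) (0, a))
     - snd (malcev_polar br_sum (x, 0) (y, 0) (0, b) (0, a))
     - snd (malcev_polar br_sum (x, 0) (0, b) (y, 0) (0, a))
     - snd (malcev_polar br_sum (x, 0) (0, a) (0, b) (y, 0))"
  "module_malcev_defect2 x y a b + module_malcev_defect2 x y a b =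
     snd (malcev_polar br_sum (x, 0) (y, 0) (0, a) (0, b))
     + snd (malcev_polar br_sum (x, 0) (0, b) (y, 0) (0, a))
     - snd (malcev_polar br_sum (x, 0) (0, a) (0, b) (y, 0))"
  "module_malcev_defect3 x a b c + module_malcev_defect3 x a b c =
     - snd (malcev_polar br_sum (x, 0) (0, a) (0, b) (0, c))
     - snd (malcev_polar br_sum (x, 0) (0, a) (0, c) (0, b))
     - snd (malcev_polar br_sum (x, 0) (0, a) (0, c) (0, b))
     - snd (malcev_polar br_sum (x, 0) (0, b) (0, c) (0, a))
     - snd (malcev_polar br_sum (x, 0) (0, c) (0, a) (0, b))"
  by (simp_all add: bracket_expand malcev_rep_defect_def module_malcev_defect1_def
      module_malcev_defect2_def module_malcev_defect3_def)

lemma fst_malcev_defect_sum: "fst (malcev_defect br_sum p q u) = 0"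
  using malcev_defect_A by (simp add: malcev_defect_def jac_def sum_br_def)

theorem sum_malcev_iff_module_malcev:
  "(\<forall>p q u. malcev_defect br_sum p q u = 0) \<longleftrightarrow> module_malcev sA brA sV brV r"
proof
  assume "\<forall>p q u. malcev_defect br_sum p q u = 0"
  then have "malcev_polar br_sum p p' q u = 0" for p p' q u
    by (intro malcev_polar_eq_0[OF bilin_br_sum]) blast
  then show "module_malcev sA brA sV brV r"
    unfolding module_malcev_iff_defects
    using double_defects_eq_malcev_polar by (auto intro: double_eq_zero_imp_zero[OF vector_space_V])
next
  assume "module_malcev sA brA sV brV r"
  then have defects: "malcev_rep_defect x y z v = 0" "module_malcev_defect1 x y a b = 0"
      "module_malcev_defect2 x y a b = 0" "module_malcev_defect3 x a b c = 0"
    for x y z v a b c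
    by (simp_all add: module_malcev_iff_defects)
  have "malcev_defect br_sum (x, a) (y, b) (z, c) = 0" for x a y b z c
  proof -
    have "snd (malcev_defect br_sum ((x, 0) + (0, a)) ((y, 0) + (0, b)) ((z, 0) + (0, c))) = 0"
      unfolding malcev_defect_add_left[OF bilin_br_sum] malcev_defect_add_mid[OF bilin_br_sum]
        malcev_defect_add_right[OF bilin_br_sum] malcev_polar_add_mid[OF bilin_br_sum]
        malcev_polar_add_right[OF bilin_br_sum] snd_add
      by (simp add: snd_malcev_defect_homogeneous snd_malcev_polar_homogeneous defects
          malcev_defect_V)
    then show ?thesis by (simp add: prod_eq_iff fst_malcev_defect_sum)
  qed
  then show "\<forall>p q u. malcev_defect br_sum p q u = 0" by simp
qed

end

locale assoc_semidirect =
  fixes sA :: "'k::field \<Rightarrow> 'a::ab_group_add \<Rightarrow> 'a"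
    and sV :: "'k \<Rightarrow> 'v::ab_group_add \<Rightarrow> 'v"
    and prA :: "'a \<Rightarrow> 'a \<Rightarrow> 'a"
    and prV :: "'v \<Rightarrow> 'v \<Rightarrow> 'v"
    and m :: "'a \<Rightarrow> 'v \<Rightarrow> 'v"
  assumes comm_assoc_A: "comm_assoc_algebra sA prA"
    and comm_assoc_V: "comm_assoc_algebra sV prV"
    and lin_m: "lin_end sA sV m"
begin

abbreviation pr_sum where "pr_sum \<equiv> sum_pr prA prV m"

definition assoc_rep_defect :: "'a \<Rightarrow> 'a \<Rightarrow> 'v \<Rightarrow> 'v" where
  "assoc_rep_defect x y v = m (prA x y) v - m x (m y v)"

definition module_assoc_defect :: "'a \<Rightarrow> 'v \<Rightarrow> 'v \<Rightarrow> 'v" where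
  "module_assoc_defect x a b = m x (prV a b) - prV (m x a) b"

lemma module_assoc_iff_defects:
  "module_assoc sA prA sV prV m \<longleftrightarrow>
     (\<forall>x y v. assoc_rep_defect x y v = 0) \<and> (\<forall>x a b. module_assoc_defect x a b = 0)"
  unfolding module_assoc_def assoc_rep_def assoc_rep_defect_def module_assoc_defect_def
    right_minus_eq
  using lin_m by blast

lemma bilin_prA: "bilin sA prA" and bilin_prV: "bilin sV prV"
  and prA_commute: "prA x y = prA y x" and prV_commute: "prV a b = prV b a"
  and assoc_defect_A: "assoc_defect prA x y z = 0" and assoc_defect_V: "assoc_defect prV a b c = 0"
  using comm_assoc_A comm_assoc_V unfolding comm_assoc_algebra_def by blast+

lemmas product_expand = sum_pr_def assoc_defect_def
  lin_end_simps(1-8)[OF bilin_prA[unfolded bilin_iff_lin_end]]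
  lin_end_simps(1-8)[OF bilin_prV[unfolded bilin_iff_lin_end]]
  lin_end_simps(1-8)[OF lin_m]

lemma snd_assoc_defect_sum:
  "snd (assoc_defect pr_sum (x, a) (y, b) (z, c)) =
     assoc_rep_defect x y c + assoc_rep_defect x z b - assoc_rep_defect z x b
     - assoc_rep_defect z y a - module_assoc_defect x b c - module_assoc_defect y a c
     + module_assoc_defect y c a + module_assoc_defect z b a + assoc_defect prV a b c"
  by (simp add: product_expand assoc_rep_defect_def module_assoc_defect_def
      prA_commute prV_commute)

lemma fst_assoc_defect_sum: "fst (assoc_defect pr_sum p q u) = 0"
  using assoc_defect_A by (simp add: assoc_defect_def sum_pr_def)

theorem sum_assoc_iff_module_assoc:
  "(\<forall>p q u. assoc_defect pr_sum p q u = 0) \<longleftrightarrow> module_assoc sA prA sV prV m"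
proof
  assume sum: "\<forall>p q u. assoc_defect pr_sum p q u = 0"
  have "assoc_rep_defect x y v = snd (assoc_defect pr_sum (x, 0) (y, 0) (0, v))"
    "module_assoc_defect x a b = - snd (assoc_defect pr_sum (x, 0) (0, a) (0, b))" for x y v a b
    by (simp_all add: product_expand assoc_rep_defect_def module_assoc_defect_def)
  then show "module_assoc sA prA sV prV m"
    using sum by (simp add: module_assoc_iff_defects)
next
  assume "module_assoc sA prA sV prV m"
  then have "assoc_defect pr_sum (x, a) (y, b) (z, c) = 0" for x a y b z c
    by (simp add: prod_eq_iff fst_assoc_defect_sum snd_assoc_defect_sum assoc_defect_V
        module_assoc_iff_defects)
  then show "\<forall>p q u. assoc_defect pr_sum p q u = 0" by simp
qed

end

definition mp_compatible ::
    "('a \<Rightarrow> 'a \<Rightarrow> 'a) \<Rightarrow> ('a \<Rightarrow> 'a \<Rightarrow> 'a) \<Rightarrow> ('v::ab_group_add \<Rightarrow> 'v \<Rightarrow> 'v) \<Rightarrow> ('v \<Rightarrow> 'v \<Rightarrow> 'v) \<Rightarrow>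
     ('a \<Rightarrow> 'v \<Rightarrow> 'v) \<Rightarrow> ('a \<Rightarrow> 'v \<Rightarrow> 'v) \<Rightarrow> bool" where
  "mp_compatible brA prA brV prV r m \<longleftrightarrow>
     (\<forall>x y v. r (prA x y) v = m y (r x v) + m x (r y v)) \<and>
     (\<forall>x y v. m (brA x y) v = r x (m y v) - m y (r x v)) \<and>
     (\<forall>x a b. r x (prV a b) = prV (r x a) b + prV a (r x b)) \<and>
     (\<forall>x a b. brV a (m x b) = - prV (r x a) b + m x (brV a b))"

lemma module_mp_iff:
  "module_mp sA brA prA sV prV brV m r \<longleftrightarrow>
     module_malcev sA brA sV brV r \<and> module_assoc sA prA sV prV m \<and>
     mp_compatible brA prA brV prV r m"
  unfolding module_mp_def mp_rep_def mp_compatible_def module_malcev_def module_assoc_def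
  by argo

locale mp_semidirect =
  fixes sA :: "'k::field_char_0 \<Rightarrow> 'a::ab_group_add \<Rightarrow> 'a"
    and sV :: "'k \<Rightarrow> 'v::ab_group_add \<Rightarrow> 'v"
    and brA prA :: "'a \<Rightarrow> 'a \<Rightarrow> 'a"
    and brV prV :: "'v \<Rightarrow> 'v \<Rightarrow> 'v"
    and r m :: "'a \<Rightarrow> 'v \<Rightarrow> 'v"
  assumes malcev_poisson_A: "malcev_poisson sA brA prA"
    and malcev_poisson_V: "malcev_poisson sV brV prV"
    and lin_r: "lin_end sA sV r"
    and lin_m: "lin_end sA sV m"

sublocale mp_semidirect \<subseteq> malcev_semidirect sA sV brA brV r
  using malcev_poisson_A malcev_poisson_V lin_r
  by unfold_locales (simp_all add: malcev_poisson_iff_defects)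

sublocale mp_semidirect \<subseteq> assoc_semidirect sA sV prA prV m
  using malcev_poisson_A malcev_poisson_V lin_m
  by unfold_locales (simp_all add: malcev_poisson_iff_defects)

context mp_semidirect
begin

definition mp_compatible_defect1 :: "'a \<Rightarrow> 'a \<Rightarrow> 'v \<Rightarrow> 'v" where
  "mp_compatible_defect1 x y v = r (prA x y) v - (m y (r x v) + m x (r y v))"

definition mp_compatible_defect2 :: "'a \<Rightarrow> 'a \<Rightarrow> 'v \<Rightarrow> 'v" where
  "mp_compatible_defect2 x y v = m (brA x y) v - (r x (m y v) - m y (r x v))"

definition mp_compatible_defect3 :: "'a \<Rightarrow> 'v \<Rightarrow> 'v \<Rightarrow> 'v" where
  "mp_compatible_defect3 x a b = r x (prV a b) - (prV (r x a) b + prV a (r x b))"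

definition mp_compatible_defect4 :: "'a \<Rightarrow> 'v \<Rightarrow> 'v \<Rightarrow> 'v" where
  "mp_compatible_defect4 x a b = brV a (m x b) - (- prV (r x a) b + m x (brV a b))"

lemmas mp_compatible_defect_defs = mp_compatible_defect1_def mp_compatible_defect2_def
  mp_compatible_defect3_def mp_compatible_defect4_def

lemma mp_compatible_iff_defects:
  "mp_compatible brA prA brV prV r m \<longleftrightarrow>
     (\<forall>x y v. mp_compatible_defect1 x y v = 0) \<and> (\<forall>x y v. mp_compatible_defect2 x y v = 0) \<and>
     (\<forall>x a b. mp_compatible_defect3 x a b = 0) \<and> (\<forall>x a b. mp_compatible_defect4 x a b = 0)"
  unfolding mp_compatible_def mp_compatible_defect_defs right_minus_eq ..

lemma leibniz_defect_A: "leibniz_defect brA prA x y z = 0"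
  and leibniz_defect_V: "leibniz_defect brV prV a b c = 0"
  using malcev_poisson_A malcev_poisson_V unfolding malcev_poisson_iff_defects by blast+

lemma fst_leibniz_defect_sum: "fst (leibniz_defect br_sum pr_sum p q u) = 0"
  using leibniz_defect_A by (simp add: leibniz_defect_def sum_br_def sum_pr_def)

lemmas leibniz_expand = leibniz_defect_def sum_br_def product_expand
  lin_end_simps(1-8)[OF bilin_brA[unfolded bilin_iff_lin_end]]
  lin_end_simps(1-8)[OF bilin_brV[unfolded bilin_iff_lin_end]]
  lin_end_simps(1-8)[OF lin_r]

lemma snd_leibniz_defect_sum:
  "snd (leibniz_defect br_sum pr_sum (x, a) (y, b) (z, c)) =
     - mp_compatible_defect1 y z a - mp_compatible_defect2 x y c - mp_compatible_defect2 x z b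
     + mp_compatible_defect3 x b c + mp_compatible_defect4 y a c + mp_compatible_defect4 z a b
     + leibniz_defect brV prV a b c"
  by (simp add: leibniz_expand mp_compatible_defect_defs prV_commute)

theorem sum_leibniz_iff_mp_compatible:
  "(\<forall>p q u. leibniz_defect br_sum pr_sum p q u = 0) \<longleftrightarrow> mp_compatible brA prA brV prV r m"
proof
  assume sum: "\<forall>p q u. leibniz_defect br_sum pr_sum p q u = 0"
  have "mp_compatible_defect1 x y v = - snd (leibniz_defect br_sum pr_sum (0, v) (x, 0) (y, 0))"
    "mp_compatible_defect2 x y v = - snd (leibniz_defect br_sum pr_sum (x, 0) (y, 0) (0, v))"
    "mp_compatible_defect3 x a b = snd (leibniz_defect br_sum pr_sum (x, 0) (0, a) (0, b))"
    "mp_compatible_defect4 x a b = snd (leibniz_defect br_sum pr_sum (0, a) (x, 0) (0, b))"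
    for x y v a b
    by (simp_all add: leibniz_expand mp_compatible_defect_defs)
  then show "mp_compatible brA prA brV prV r m"
    using sum by (simp add: mp_compatible_iff_defects)
next
  assume "mp_compatible brA prA brV prV r m"
  then have "leibniz_defect br_sum pr_sum (x, a) (y, b) (z, c) = 0" for x a y b z c
    by (simp add: prod_eq_iff fst_leibniz_defect_sum snd_leibniz_defect_sum leibniz_defect_V
        mp_compatible_iff_defects)
  then show "\<forall>p q u. leibniz_defect br_sum pr_sum p q u = 0" by simp
qed

lemma malcev_poisson_sum_iff:
  "malcev_poisson (sum_scale sA sV) br_sum pr_sum \<longleftrightarrow>
     (\<forall>p q u. malcev_defect br_sum p q u = 0) \<and> (\<forall>p q u. assoc_defect pr_sum p q u = 0) \<and>
     (\<forall>p q u. leibniz_defect br_sum pr_sum p q u = 0)"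
proof -
  have "vector_space (sum_scale sA sV)"
    using vector_space_A vector_space_V by (rule vector_space_sum_scale)
  moreover have "br_sum p q = - br_sum q p" for p q
    using malcev_A malcev_V unfolding malcev_algebra_def by (intro sum_br_antisym) blast+
  moreover have "pr_sum p q = pr_sum q p" for p q
    using prA_commute prV_commute by (rule sum_pr_commute)
  moreover have "bilin (sum_scale sA sV) pr_sum"
    using bilin_prA bilin_prV lin_m by (rule bilin_sum_pr)
  ultimately show ?thesis
    unfolding malcev_poisson_iff_defects malcev_algebra_iff_defect comm_assoc_algebra_def
    using bilin_br_sum by blast
qed

end

theorem mainTheorem5:
  fixes sA :: "'k::field_char_0 \<Rightarrow> 'a::ab_group_add \<Rightarrow> 'a"
    and sV :: "'k \<Rightarrow> 'v::ab_group_add \<Rightarrow> 'v"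
    and brA prA :: "'a \<Rightarrow> 'a \<Rightarrow> 'a"
    and brV prV :: "'v \<Rightarrow> 'v \<Rightarrow> 'v"
    and r m :: "'a \<Rightarrow> 'v \<Rightarrow> 'v"
  assumes "alg_closed TYPE('k)"
    and "fin_dim sA" and "fin_dim sV"
    and "malcev_poisson sA brA prA"
    and "malcev_poisson sV brV prV"
    and "lin_end sA sV r" and "lin_end sA sV m"
  shows "module_mp sA brA prA sV prV brV m r \<longleftrightarrow>
         malcev_poisson (sum_scale sA sV) (sum_br brA brV r) (sum_pr prA prV m)"
proof -
  interpret mp_semidirect sA sV brA prA brV prV r m
    using assms(4-7) by unfold_locales
  show ?thesis
    unfolding module_mp_iff malcev_poisson_sum_iff sum_malcev_iff_module_malcev
      sum_assoc_iff_module_assoc sum_leibniz_iff_mp_compatible ..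
qed

end
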